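(* Let $b\in\mathbb B^d$ be fixed, $T>0$, and let $\phi_T$ and $G_T$ be the modified corrector and the Green's function. Then, as functions of $a\in\Omega$, $$\frac{\partial\phi_T(x=0)}{\partial a(b)}=-\nabla G_T(b,0)\big(\nabla\phi_T(b)+e(b)\big),$$ $$\frac{\partial}{\partial a(b)}\frac{\partial\phi_T(x=0)}{\partial a(b)}=-2\,\nabla\nabla G_T(b,b)\,\frac{\partial\phi_T(x=0)}{\partial a(b)},\qquad \frac{\partial}{\partial a(b)}\nabla\nabla G_T(b,b)=-\big(\nabla\nabla G_T(b,b)\big)^2.$$ Moreover, $\nabla\nabla G_T(b,b)>0$ and $1-a(b)\nabla\nabla G_T(b,b)>0$.
   Context: $\mathbb B^d$ is the set of nearest-neighbour bonds of $\mathbb Z^d$; $x_b,y_b$ endpoints of $b$ with $y_b-x_b\in\{e_1,\dots,e_d\}$; $\nabla u(b)=u(y_b)-u(x_b)$, $\nabla^*F(x)=\sum_i(F(\{x-e_i,x\})-F(\{x,x+e_i\}))$; $e\in\mathbb R^d$ is a fixed unit vector and $e(b)=e\cdot(y_b-x_b)$. $\Omega=[0,1]^{\mathbb B^d}$. The Green's function: for $a\in\Omega$ and $y\in\mathbb Z^d$, $x\mapsto G_T(a,x,y)$ is the unique $\ell^2(\mathbb Z^d)$ solution of $\frac1TG_T(a,\cdot,y)+\nabla^*(a\nabla G_T(a,\cdot,y))=\delta(\cdot-y)$. $\nabla G_T(b,0)$ is the gradient in the first variable at $b$ with $y=0$, and $\nabla\nabla G_T(b,b')=G_T(y_b,y_{b'})-G_T(x_b,y_{b'})-G_T(y_b,x_{b'})+G_T(x_b,x_{b'})$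 (gradient in both variables). The modified corrector $\phi_T(a,x)$ is the stationary (i.e. $\phi_T(a(\cdot+z),x)=\phi_T(a,x+z)$) field with finite second moment solving $\frac1T\phi_T+\nabla^*(a(\nabla\phi_T+e))=0$ for all $x\in\mathbb Z^d$ and $a\in\Omega$. $\partial/\partial a(b)$ denotes the classical partial derivative with respect to the coordinate $a(b)$ (all other coordinates fixed). *)

theory Defs
  imports "HOL-Analysis.Analysis"
begin

text \<open>Lattice points of Z^d are vectors int^'d (d = CARD('d)).
  A nearest-neighbour bond b = {x, x + e_i} is encoded as the pair (x, i), so that
  x_b = x and y_b = x + e_i.\<close>

type_synonym 'd point = "int ^ 'd"
type_synonym 'd bond = "'d point \<times> 'd"

definition unitv :: "'d::finite \<Rightarrow> 'd point" where
  "unitv i = (\<chi> j. if j = i then 1 else 0)"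

definition xb :: "'d::finite bond \<Rightarrow> 'd point" where
  "xb b = fst b"

definition yb :: "'d::finite bond \<Rightarrow> 'd point" where
  "yb b = fst b + unitv (snd b)"

definition grad :: "('d::finite point \<Rightarrow> real) \<Rightarrow> 'd bond \<Rightarrow> real" where
  "grad u b = u (yb b) - u (xb b)"

definition nabla_star :: "('d::finite bond \<Rightarrow> real) \<Rightarrow> 'd point \<Rightarrow> real" where
  "nabla_star F x = (\<Sum>i\<in>UNIV. F (x - unitv i, i) - F (x, i))"

text \<open>e(b) = e . (y_b - x_b) for a fixed vector e.\<close>
definition ebond :: "real ^ 'd \<Rightarrow> 'd::finite bond \<Rightarrow> real" where
  "ebond e b = e $ snd b"

definition Omega :: "('d::finite bond \<Rightarrow> real) set" where
  "Omega = {a. \<forall>b. 0 \<le> a b \<and> a b \<le> 1}"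

definition shift_coeff :: "'d::finite point \<Rightarrow> ('d bond \<Rightarrow> real) \<Rightarrow> ('d bond \<Rightarrow> real)" where
  "shift_coeff z a = (\<lambda>b. a (fst b + z, snd b))"

definition green :: "real \<Rightarrow> ('d::finite bond \<Rightarrow> real) \<Rightarrow> 'd point \<Rightarrow> 'd point \<Rightarrow> real" where
  "green T a y = (THE u. (\<lambda>x. (u x)\<^sup>2) summable_on UNIV \<and>
      (\<forall>x. u x / T + nabla_star (\<lambda>b. a b * grad u b) x = (if x = y then 1 else 0)))"

definition gradG :: "real \<Rightarrow> ('d::finite bond \<Rightarrow> real) \<Rightarrow> 'd bond \<Rightarrow> real" where
  "gradG T a b = grad (green T a 0) b"

text \<open>\<nabla>\<nabla>G_T(b,b'), gradient in both variables; green T a y x = G_T(a,x,y).\<close>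
definition hessG :: "real \<Rightarrow> ('d::finite bond \<Rightarrow> real) \<Rightarrow> 'd bond \<Rightarrow> 'd bond \<Rightarrow> real" where
  "hessG T a b b' = green T a (yb b') (yb b) - green T a (yb b') (xb b)
                  - green T a (xb b') (yb b) + green T a (xb b') (xb b)"

text \<open>Characterisation of the modified corrector: stationary, (deterministically) of
  finite size (bounded in x for each a), solving (1/T) phi + \<nabla>^*(a(\<nabla>phi + e)) = 0
  for all x and all a in Omega.\<close>
definition is_mod_corrector ::
  "real \<Rightarrow> real ^ 'd \<Rightarrow> (('d::finite bond \<Rightarrow> real) \<Rightarrow> 'd point \<Rightarrow> real) \<Rightarrow> bool" where
  "is_mod_corrector T e phi \<longleftrightarrow>
     (\<forall>a\<in>Omega. \<forall>x z. phi (shift_coeff z a) x = phi a (x + z)) \<and>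
     (\<forall>a\<in>Omega. bounded (range (phi a))) \<and>
     (\<forall>a\<in>Omega. \<forall>x. phi a x / T
        + nabla_star (\<lambda>b. a b * (grad (phi a) b + ebond e b)) x = 0)"

end

theory Submission
  imports Defs
begin

text \<open>The operator \<open>u \<mapsto> u/T + \<nabla>\<^sup>*(a \<nabla>u)\<close> obeys a maximum principle on bounded functions, so
  its bounded solutions are unique; a summable solution of the Green's equation is built as a Jacobi
  (Neumann) series, and by uniqueness it is \<open>G\<^sub>T\<close>. Changing the single coefficient \<open>a(b)\<close> by \<open>\<delta>\<close>
  perturbs the operator by a rank-one term supported on the endpoints of \<open>b\<close>, so a Sherman-Morrison
  formula gives the perturbed corrector and Green's function in closed form, with denominator
  \<open>1 + \<delta> \<nabla>\<nabla>G\<^sub>T(b,b)\<close>; the three identities are derivatives at \<open>\<delta> = 0\<close> of these rational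
  functions of \<open>\<delta>\<close>. Testing the equation of \<open>g = G\<^sub>T(\<cdot>,y\<^sub>b) - G\<^sub>T(\<cdot>,x\<^sub>b)\<close> against \<open>g\<close> gives
  \<open>\<nabla>\<nabla>G\<^sub>T(b,b) = \<Sum> g\<^sup>2/T + \<Sum> a |\<nabla>g|\<^sup>2 > a(b) \<nabla>\<nabla>G\<^sub>T(b,b)\<^sup>2\<close>, whence both inequalities.\<close>

section \<open>Summable real families\<close>

lemma summable_on_imp_bounded:
  fixes f :: "'a \<Rightarrow> real"
  assumes "f summable_on UNIV"
  shows "bounded (range f)"
proof -
  have "(\<lambda>x. norm (f x)) summable_on UNIV"
    using assms by (rule summable_on_iff_abs_summable_on_real[THEN iffD1])
  then have "\<bar>f x\<bar> \<le> (\<Sum>\<^sub>\<infinity>x. \<bar>f x\<bar>)" for x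
    using finite_sum_le_infsum[of "\<lambda>x. \<bar>f x\<bar>" UNIV "{x}"] by simp
  then show ?thesis
    by (intro boundedI[of _ "\<Sum>\<^sub>\<infinity>x. \<bar>f x\<bar>"]) auto
qed

lemma summable_on_mult_bounded:
  fixes f g :: "'a \<Rightarrow> real"
  assumes g: "g summable_on A" and f: "\<And>x. \<bar>f x\<bar> \<le> B"
  shows "(\<lambda>x. f x * g x) summable_on A"
proof -
  have "(\<lambda>x. B * g x) summable_on A"
    using g by (rule summable_on_cmult_right)
  then have "(\<lambda>x. norm (B * g x)) summable_on A"
    by (rule summable_on_iff_abs_summable_on_real[THEN iffD1])
  then have "(\<lambda>x. norm (f x * g x)) summable_on A"
  proof (rule Infinite_Sum.abs_summable_on_comparison_test)
    show "norm (f x * g x) \<le> norm (B * g x)" for x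
      using f[of x] abs_ge_zero[of "g x"] by (auto simp: abs_mult intro: mult_right_mono)
  qed
  then show ?thesis
    by (rule summable_on_iff_abs_summable_on_real[THEN iffD2])
qed

lemma summable_on_diff:
  fixes f g :: "'a \<Rightarrow> 'b::real_normed_vector"
  shows "f summable_on A \<Longrightarrow> g summable_on A \<Longrightarrow> (\<lambda>x. f x - g x) summable_on A"
  using summable_on_add[of f A "\<lambda>x. - g x"] summable_on_uminus[of g A] by simp

lemma infsum_diff:
  fixes f g :: "'a \<Rightarrow> 'b::real_normed_vector"
  shows "f summable_on A \<Longrightarrow> g summable_on A \<Longrightarrow> (\<Sum>\<^sub>\<infinity>x\<in>A. f x - g x) = infsum f A - infsum g A"
  using infsum_add[of f A "\<lambda>x. - g x"] summable_on_uminus[of g A] infsum_uminus[of g A] by simp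

lemma summable_on_finite_sum:
  fixes f :: "'i \<Rightarrow> 'a \<Rightarrow> real"
  shows "finite I \<Longrightarrow> (\<And>i. i \<in> I \<Longrightarrow> f i summable_on A) \<Longrightarrow> (\<lambda>x. \<Sum>i\<in>I. f i x) summable_on A"
  by (induction I rule: finite_induct) (auto intro!: summable_on_add)

lemma infsum_finite_sum:
  fixes f :: "'i \<Rightarrow> 'a \<Rightarrow> real"
  shows "finite I \<Longrightarrow> (\<And>i. i \<in> I \<Longrightarrow> f i summable_on A)
    \<Longrightarrow> (\<Sum>\<^sub>\<infinity>x\<in>A. \<Sum>i\<in>I. f i x) = (\<Sum>i\<in>I. infsum (f i) A)"
  by (induction I rule: finite_induct) (auto simp: infsum_add summable_on_finite_sum)

lemma bij_betw_add_right: "bij_betw (\<lambda>x :: 'a::ab_group_add. x + h) UNIV UNIV"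
  by (rule bij_betwI[where g = "\<lambda>x. x - h"]) auto

lemma summable_on_shift:
  "f summable_on UNIV \<Longrightarrow> (\<lambda>x. f (x + h)) summable_on (UNIV :: 'a::ab_group_add set)"
  using summable_on_reindex_bij_betw[OF bij_betw_add_right, of f h] by simp

lemma infsum_shift: "(\<Sum>\<^sub>\<infinity>x. f (x + h)) = infsum f (UNIV :: 'a::ab_group_add set)"
  by (rule infsum_reindex_bij_betw[OF bij_betw_add_right])

section \<open>The elliptic operator and the maximum principle\<close>

lemma yb_neq_xb: "yb b \<noteq> xb (b :: 'd::finite bond)"
proof -
  have "unitv (snd b) $ snd b = (1 :: int)"
    by (simp add: unitv_def)
  then have "unitv (snd b) \<noteq> (0 :: 'd point)"
    by auto
  then show ?thesis
    unfolding yb_def xb_def by simp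
qed

lemma OmegaD: "a \<in> Omega \<Longrightarrow> 0 \<le> a b \<and> a b \<le> 1"
  unfolding Omega_def by blast

lemma fun_upd_in_Omega: "a \<in> Omega \<Longrightarrow> t \<in> {0..1} \<Longrightarrow> a(b := t) \<in> Omega"
  unfolding Omega_def by auto

definition elliptic_op :: "('d::finite bond \<Rightarrow> real) \<Rightarrow> ('d point \<Rightarrow> real) \<Rightarrow> 'd point \<Rightarrow> real"
  where "elliptic_op a u x = nabla_star (\<lambda>b. a b * grad u b) x"

lemma elliptic_op_eq:
  "elliptic_op a u x = (\<Sum>i\<in>UNIV. a (x - unitv i, i) * (u x - u (x - unitv i))
                                   - a (x, i) * (u (x + unitv i) - u x))"
  unfolding elliptic_op_def nabla_star_def grad_def yb_def xb_def by simp

lemma elliptic_op_diff: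
  "elliptic_op a (\<lambda>x. u x - k * v x) z = elliptic_op a u z - k * elliptic_op a v z"
  unfolding elliptic_op_eq sum_distrib_left sum_subtractf[symmetric]
  by (rule sum.cong) (auto simp: algebra_simps)

definition dipole :: "'d::finite bond \<Rightarrow> 'd point \<Rightarrow> real"
  where "dipole b x = (if x = yb b then 1 else 0) - (if x = xb b then 1 else 0)"

lemma nabla_star_add: "nabla_star (\<lambda>b. F b + G b) x = nabla_star F x + nabla_star G x"
  unfolding nabla_star_def sum.distrib[symmetric] by (rule sum.cong) auto

lemma nabla_star_point_mass: "nabla_star (\<lambda>b'. if b' = b then c else 0) x = c * dipole b x"
proof -
  have "nabla_star (\<lambda>b'. if b' = b then c else 0) x
      = (\<Sum>i\<in>UNIV. if i = snd b
           then (if x - unitv (snd b) = fst b then c else 0) - (if x = fst b then c else 0) else 0)"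
    unfolding nabla_star_def by (rule sum.cong) (auto simp: prod_eq_iff)
  also have "\<dots> = c * dipole b x"
    unfolding dipole_def yb_def xb_def by (auto simp: algebra_simps)
  finally show ?thesis .
qed

lemma nabla_star_fun_upd:
  "nabla_star (\<lambda>b'. (a(b := t)) b' * h b') x
     = nabla_star (\<lambda>b'. a b' * h b') x + (t - a b) * h b * dipole b x"
proof -
  have "(\<lambda>b'. (a(b := t)) b' * h b') = (\<lambda>b'. a b' * h b' + (if b' = b then (t - a b) * h b else 0))"
    by (auto simp: algebra_simps)
  then show ?thesis
    by (simp add: nabla_star_add nabla_star_point_mass)
qed

lemma elliptic_op_fun_upd:
  "elliptic_op (a(b := t)) u x = elliptic_op a u x + (t - a b) * grad u b * dipole b x"
  unfolding elliptic_op_def by (rule nabla_star_fun_upd)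


lemma elliptic_op_ge_of_almost_max:
  fixes a :: "'d::finite bond \<Rightarrow> real"
  assumes a: "a \<in> Omega" and \<epsilon>: "\<epsilon> \<ge> 0" and almost_max: "\<And>w. u w \<le> u z + \<epsilon>"
  shows "elliptic_op a u z \<ge> - 2 * real CARD('d) * \<epsilon>"
proof -
  have term_ge: "c * (u z - u w) \<ge> - \<epsilon>" if "0 \<le> c" "c \<le> 1" for c w
  proof -
    have "c * (u z - u w) \<ge> c * (- \<epsilon>)"
      using almost_max[of w] that by (intro mult_left_mono) auto
    moreover have "c * (- \<epsilon>) \<ge> - \<epsilon>"
      using that \<epsilon> by (simp add: mult_left_le_one_le)
    ultimately show ?thesis
      by linarith
  qed
  have "elliptic_op a u z = (\<Sum>i\<in>UNIV. a (z - unitv i, i) * (u z - u (z - unitv i))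
                                       + a (z, i) * (u z - u (z + unitv i)))"
    unfolding elliptic_op_eq by (simp add: algebra_simps)
  also have "\<dots> \<ge> (\<Sum>i\<in>(UNIV :: 'd set). - 2 * \<epsilon>)"
  proof (rule sum_mono)
    fix i
    show "- 2 * \<epsilon> \<le> a (z - unitv i, i) * (u z - u (z - unitv i)) + a (z, i) * (u z - u (z + unitv i))"
      using term_ge[of "a (z - unitv i, i)" "z - unitv i"] term_ge[of "a (z, i)" "z + unitv i"]
        OmegaD[OF a, of "(z - unitv i, i)"] OmegaD[OF a, of "(z, i)"] by linarith
  qed
  finally show ?thesis
    by (simp add: algebra_simps)
qed

lemma maximum_principle:
  fixes u :: "'d::finite point \<Rightarrow> real"
  assumes T: "T > 0" and a: "a \<in> Omega" and bdd: "bdd_above (range u)"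
    and sub: "\<And>x. u x / T + elliptic_op a u x \<le> 0"
  shows "u x \<le> 0"
proof (rule ccontr)
  assume "\<not> u x \<le> 0"
  define M where "M = Sup (range u)"
  have le_M: "u y \<le> M" for y
    unfolding M_def using bdd by (auto intro: cSup_upper)
  have M: "M > 0"
    using le_M[of x] \<open>\<not> u x \<le> 0\<close> by linarith
  define d where "d = real CARD('d)"
  define \<epsilon> where "\<epsilon> = M / (2 * (1 + 2 * d * T))"
  have den: "2 * (1 + 2 * d * T) > 0"
    unfolding d_def using T by (simp add: add_pos_nonneg)
  then have \<epsilon>: "\<epsilon> > 0"
    unfolding \<epsilon>_def using M by simp
  \<comment> \<open>The supremum need not be attained, so we work at an \<open>\<epsilon>\<close>-almost maximiser \<open>z\<close>.\<close>
  obtain z where z: "M - \<epsilon> < u z"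
    using less_cSup_iff[of "range u" "M - \<epsilon>"] bdd \<epsilon> unfolding M_def[symmetric] by auto
  have "u w \<le> u z + \<epsilon>" for w
    using le_M[of w] z by linarith
  then have "elliptic_op a u z \<ge> - 2 * d * \<epsilon>"
    unfolding d_def using \<epsilon> by (intro elliptic_op_ge_of_almost_max[OF a]) auto
  then have "T * (- elliptic_op a u z) \<le> T * (2 * \<epsilon> * d)"
    using T by (intro mult_left_mono) (auto simp: algebra_simps)
  moreover have "u z \<le> T * (- elliptic_op a u z)"
    using sub[of z] T by (simp add: field_simps)
  ultimately have "u z \<le> T * (2 * \<epsilon> * d)"
    by linarith
  with z have "M < \<epsilon> * (1 + 2 * d * T)"
    by (simp add: algebra_simps)
  also have "\<dots> = M / 2"
    unfolding \<epsilon>_def using den by (simp add: field_simps)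
  finally show False
    using M by simp
qed

lemma bounded_solution_unique:
  fixes u v :: "'d::finite point \<Rightarrow> real"
  assumes T: "T > 0" and a: "a \<in> Omega"
    and bounded: "bounded (range u)" "bounded (range v)"
    and u: "\<And>x. u x / T + elliptic_op a u x = f x"
    and v: "\<And>x. v x / T + elliptic_op a v x = f x"
  shows "u = v"
proof -
  have le: "p x - 1 * q x \<le> 0"
    if pq: "bounded (range p)" "bounded (range q)" "\<And>x. p x / T + elliptic_op a p x = f x"
      "\<And>x. q x / T + elliptic_op a q x = f x" for p q :: "'d point \<Rightarrow> real" and x
  proof (rule maximum_principle[OF T a])
    show "bdd_above (range (\<lambda>x. p x - 1 * q x))"
      using bounded_minus_comp[OF pq(1,2)] by (simp add: bounded_imp_bdd_above)
    show "(p y - 1 * q y) / T + elliptic_op a (\<lambda>x. p x - 1 * q x) y \<le> 0" for y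
      unfolding elliptic_op_diff using pq(3,4)[of y] by (simp add: diff_divide_distrib)
  qed
  show "u = v"
    using le[OF bounded u v] le[OF bounded(2,1) v u] by (simp add: fun_eq_iff) (meson antisym)
qed


section \<open>Construction of the Green's function\<close>

definition conductance :: "('d::finite bond \<Rightarrow> real) \<Rightarrow> 'd point \<Rightarrow> real"
  where "conductance a x = (\<Sum>i\<in>UNIV. a (x - unitv i, i) + a (x, i))"

definition neighbour_sum :: "('d::finite bond \<Rightarrow> real) \<Rightarrow> ('d point \<Rightarrow> real) \<Rightarrow> 'd point \<Rightarrow> real"
  where "neighbour_sum a u x =
    (\<Sum>i\<in>UNIV. a (x - unitv i, i) * u (x - unitv i) + a (x, i) * u (x + unitv i))"

lemma elliptic_op_eq_conductance:
  "elliptic_op a u x = conductance a x * u x - neighbour_sum a u x"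
  unfolding elliptic_op_eq conductance_def neighbour_sum_def sum_distrib_right sum_subtractf[symmetric]
  by (rule sum.cong) (auto simp: algebra_simps)

lemma conductance_bounds:
  fixes a :: "'d::finite bond \<Rightarrow> real"
  assumes "a \<in> Omega"
  shows "0 \<le> conductance a x" and "conductance a x \<le> 2 * real CARD('d::finite)"
proof -
  have bond_bounds: "0 \<le> a (x - unitv i, i) + a (x, i)" "a (x - unitv i, i) + a (x, i) \<le> 2" for i
    using OmegaD[OF assms, of "(x - unitv i, i)"] OmegaD[OF assms, of "(x, i)"] by auto
  show "0 \<le> conductance a x"
    unfolding conductance_def using bond_bounds(1) by (simp add: sum_nonneg)
  have "conductance a x \<le> (\<Sum>i\<in>(UNIV :: 'd set). 2)"
    unfolding conductance_def using bond_bounds(2) by (intro sum_mono)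
  then show "conductance a x \<le> 2 * real CARD('d)"
    by simp
qed

lemma sum_abs_neighbour_sum_le:
  fixes a :: "'d::finite bond \<Rightarrow> real"
  assumes a: "a \<in> Omega" and F: "finite F"
  obtains F' where "finite F'"
    and "(\<Sum>x\<in>F. \<bar>neighbour_sum a u x\<bar>) \<le> (\<Sum>y\<in>F'. conductance a y * \<bar>u y\<bar>)"
proof
  define F' where "F' = (\<Union>i. (\<lambda>x. x - unitv i) ` F \<union> (\<lambda>x. x + unitv i) ` F)"
  show F': "finite F'"
    unfolding F'_def using F by auto
  have a_nonneg: "0 \<le> a b'" for b'
    using OmegaD[OF a] by blast
  have "(\<Sum>x\<in>F. \<bar>neighbour_sum a u x\<bar>)
      \<le> (\<Sum>x\<in>F. \<Sum>i\<in>UNIV. a (x - unitv i, i) * \<bar>u (x - unitv i)\<bar> + a (x, i) * \<bar>u (x + unitv i)\<bar>)"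
    unfolding neighbour_sum_def
    by (intro sum_mono order.trans[OF sum_abs] order.trans[OF abs_triangle_ineq])
       (simp add: abs_mult a_nonneg)
  also have "\<dots> = (\<Sum>i\<in>UNIV. (\<Sum>y\<in>(\<lambda>x. x - unitv i) ` F. a (y, i) * \<bar>u y\<bar>)
                             + (\<Sum>y\<in>(\<lambda>x. x + unitv i) ` F. a (y - unitv i, i) * \<bar>u y\<bar>))"
    by (subst sum.swap) (simp add: sum.distrib sum.reindex inj_on_def)
  also have "\<dots> \<le> (\<Sum>i\<in>UNIV. (\<Sum>y\<in>F'. a (y, i) * \<bar>u y\<bar>) + (\<Sum>y\<in>F'. a (y - unitv i, i) * \<bar>u y\<bar>))"
    by (intro sum_mono add_mono sum_mono2[OF F']) (auto simp: F'_def a_nonneg)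
  also have "\<dots> = (\<Sum>y\<in>F'. conductance a y * \<bar>u y\<bar>)"
    unfolding conductance_def sum_distrib_right sum.distrib[symmetric]
    by (subst sum.swap) (auto intro!: sum.cong simp: algebra_simps)
  finally show "(\<Sum>x\<in>F. \<bar>neighbour_sum a u x\<bar>) \<le> (\<Sum>y\<in>F'. conductance a y * \<bar>u y\<bar>)" .
qed

lemma jacobi_step_mass:
  fixes a :: "'d::finite bond \<Rightarrow> real"
  assumes a: "a \<in> Omega" and c: "c > 0" and F: "finite F"
    and mass: "\<And>F. finite F \<Longrightarrow> (\<Sum>x\<in>F. (c + conductance a x) * \<bar>u x\<bar>) \<le> K"
  shows "(\<Sum>x\<in>F. \<bar>neighbour_sum a u x\<bar>) \<le> 2 * real CARD('d) / (c + 2 * real CARD('d)) * K"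
proof -
  define q where "q = 2 * real CARD('d) / (c + 2 * real CARD('d))"
  obtain F' where F': "finite F'"
    and le: "(\<Sum>x\<in>F. \<bar>neighbour_sum a u x\<bar>) \<le> (\<Sum>y\<in>F'. conductance a y * \<bar>u y\<bar>)"
    using sum_abs_neighbour_sum_le[OF a F] by blast
  have "conductance a y \<le> q * (c + conductance a y)" for y
  proof -
    have "q * (c + conductance a y) - conductance a y
        = c * (2 * real CARD('d) - conductance a y) / (c + 2 * real CARD('d))"
      unfolding q_def using c by (simp add: field_simps)
    also have "\<dots> \<ge> 0"
      using conductance_bounds[OF a, of y] c by (intro divide_nonneg_pos mult_nonneg_nonneg) auto
    finally show ?thesis
      by simp
  qed
  then have "(\<Sum>y\<in>F'. conductance a y * \<bar>u y\<bar>) \<le> (\<Sum>y\<in>F'. q * ((c + conductance a y) * \<bar>u y\<bar>))"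
    by (intro sum_mono) (simp add: mult_right_mono mult.assoc[symmetric])
  also have "\<dots> \<le> q * K"
    unfolding sum_distrib_left[symmetric] using mass[OF F'] c
    by (intro mult_left_mono) (auto simp: q_def)
  finally show ?thesis
    using le unfolding q_def by linarith
qed

lemma mult_abs_div_conductance:
  assumes "a \<in> Omega" and "c > 0"
  shows "(c + conductance a x) * \<bar>r / (c + conductance a x)\<bar> = \<bar>r\<bar>"
  using conductance_bounds(1)[OF assms(1), of x] assms(2) by (simp add: abs_div)

fun jacobi_iter :: "real \<Rightarrow> ('d::finite bond \<Rightarrow> real) \<Rightarrow> 'd point \<Rightarrow> nat \<Rightarrow> 'd point \<Rightarrow> real"
  where
    "jacobi_iter c a y 0 x = (if x = y then 1 else 0) / (c + conductance a x)"
  | "jacobi_iter c a y (Suc k) x = neighbour_sum a (jacobi_iter c a y k) x / (c + conductance a x)"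

lemma jacobi_iter_mass:
  fixes a :: "'d::finite bond \<Rightarrow> real"
  assumes a: "a \<in> Omega" and c: "c > 0"
  shows "finite F \<Longrightarrow> (\<Sum>x\<in>F. (c + conductance a x) * \<bar>jacobi_iter c a y k x\<bar>)
           \<le> (2 * real CARD('d) / (c + 2 * real CARD('d))) ^ k"
proof (induction k arbitrary: F)
  case 0
  have "(\<Sum>x\<in>F. (c + conductance a x) * \<bar>jacobi_iter c a y 0 x\<bar>) = (\<Sum>x\<in>F. if x = y then 1 else 0)"
    by (intro sum.cong) (simp_all only: jacobi_iter.simps mult_abs_div_conductance[OF a c], simp)
  also have "\<dots> \<le> 1"
    using 0 by (simp add: sum.delta)
  finally show ?case
    by simp
next
  case (Suc k)
  have "(\<Sum>x\<in>F. (c + conductance a x) * \<bar>jacobi_iter c a y (Suc k) x\<bar>)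
      = (\<Sum>x\<in>F. \<bar>neighbour_sum a (jacobi_iter c a y k) x\<bar>)"
    by (intro sum.cong) (simp_all only: jacobi_iter.simps mult_abs_div_conductance[OF a c])
  also have "\<dots> \<le> (2 * real CARD('d) / (c + 2 * real CARD('d))) ^ Suc k"
    using jacobi_step_mass[OF a c Suc.prems Suc.IH] by simp
  finally show ?case .
qed

lemma sum_abs_jacobi_iter_le:
  fixes a :: "'d::finite bond \<Rightarrow> real"
  assumes a: "a \<in> Omega" and c: "c > 0" and F: "finite F"
  shows "c * (\<Sum>x\<in>F. \<bar>jacobi_iter c a y k x\<bar>) \<le> (2 * real CARD('d) / (c + 2 * real CARD('d))) ^ k"
proof -
  have "c * (\<Sum>x\<in>F. \<bar>jacobi_iter c a y k x\<bar>) \<le> (\<Sum>x\<in>F. (c + conductance a x) * \<bar>jacobi_iter c a y k x\<bar>)"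
    unfolding sum_distrib_left using conductance_bounds(1)[OF a] by (intro sum_mono mult_right_mono) auto
  also have "\<dots> \<le> (2 * real CARD('d) / (c + 2 * real CARD('d))) ^ k"
    by (rule jacobi_iter_mass[OF a c F])
  finally show ?thesis .
qed

lemma jacobi_series_eq:
  fixes a :: "'d::finite bond \<Rightarrow> real"
  assumes a: "a \<in> Omega" and c: "c > 0"
    and summable: "\<And>x. summable (\<lambda>k. jacobi_iter c a y k x)"
  defines "u \<equiv> \<lambda>x. \<Sum>k. jacobi_iter c a y k x"
  shows "(c + conductance a x) * u x = (if x = y then 1 else 0) + neighbour_sum a u x"
proof -
  let ?w = "c + conductance a x"
  have sums: "(\<lambda>k. jacobi_iter c a y k z) sums u z" for z
    unfolding u_def using summable by (simp add: summable_sums)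
  have pos: "?w > 0"
    using conductance_bounds(1)[OF a, of x] c by simp
  have "(\<lambda>k. ?w * jacobi_iter c a y (Suc k) x) sums neighbour_sum a u x"
    using pos unfolding jacobi_iter.simps neighbour_sum_def by (auto intro!: sums_sum sums_add sums_mult sums)
  then have "(\<lambda>k. ?w * jacobi_iter c a y k x) sums (neighbour_sum a u x + ?w * jacobi_iter c a y 0 x)"
    by (subst (asm) sums_Suc_iff)
  moreover have "(\<lambda>k. ?w * jacobi_iter c a y k x) sums (?w * u x)"
    by (rule sums_mult[OF sums])
  ultimately have "neighbour_sum a u x + ?w * jacobi_iter c a y 0 x = ?w * u x"
    by (rule sums_unique2)
  then show ?thesis
    using pos by simp
qed

lemma jacobi_series_summable:
  fixes a :: "'d::finite bond \<Rightarrow> real"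
  assumes a: "a \<in> Omega" and c: "c > 0"
  shows "summable (\<lambda>k. \<bar>jacobi_iter c a y k x\<bar>)"
    and "(\<lambda>x. \<Sum>k. jacobi_iter c a y k x) summable_on UNIV"
proof -
  define q where "q = 2 * real CARD('d) / (c + 2 * real CARD('d))"
  have geometric: "summable (\<lambda>k. q ^ k / c)"
    unfolding q_def using c by (intro summable_divide summable_geometric) simp
  have mass: "(\<Sum>x\<in>F. \<bar>jacobi_iter c a y k x\<bar>) \<le> q ^ k / c" if "finite F" for F k
    using sum_abs_jacobi_iter_le[OF a c that] c unfolding q_def by (simp add: field_simps)
  have summable_abs: "summable (\<lambda>k. \<bar>jacobi_iter c a y k x\<bar>)" for x
    using mass[of "{x}"] by (intro summable_comparison_test'[OF geometric]) auto
  then show "summable (\<lambda>k. \<bar>jacobi_iter c a y k x\<bar>)" .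
  have "(\<Sum>x\<in>F. \<bar>\<Sum>k. jacobi_iter c a y k x\<bar>) \<le> (\<Sum>k. q ^ k / c)" if "finite F" for F
  proof -
    have "(\<Sum>x\<in>F. \<bar>\<Sum>k. jacobi_iter c a y k x\<bar>) \<le> (\<Sum>x\<in>F. \<Sum>k. \<bar>jacobi_iter c a y k x\<bar>)"
      by (intro sum_mono summable_rabs summable_abs)
    also have "\<dots> = (\<Sum>k. \<Sum>x\<in>F. \<bar>jacobi_iter c a y k x\<bar>)"
      by (rule suminf_sum[symmetric]) (rule summable_abs)
    also have "\<dots> \<le> (\<Sum>k. q ^ k / c)"
      by (intro suminf_le summable_sum summable_abs geometric mass that)
    finally show ?thesis .
  qed
  then have "(\<lambda>x. norm (\<Sum>k. jacobi_iter c a y k x)) summable_on UNIV"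
    by (intro nonneg_bdd_above_summable_on bdd_aboveI2) auto
  then show "(\<lambda>x. \<Sum>k. jacobi_iter c a y k x) summable_on UNIV"
    by (rule summable_on_iff_abs_summable_on_real[THEN iffD2])
qed

lemma exists_summable_solution:
  fixes a :: "'d::finite bond \<Rightarrow> real" and y :: "'d point"
  assumes T: "T > 0" and a: "a \<in> Omega"
  obtains u where "u summable_on UNIV"
    and "\<And>x. u x / T + elliptic_op a u x = (if x = y then 1 else 0)"
proof
  have c: "1 / T > 0"
    using T by simp
  note summable = jacobi_series_summable[OF a c, of y]
  show "(\<lambda>x. \<Sum>k. jacobi_iter (1 / T) a y k x) summable_on UNIV"
    by (rule summable(2))
  show "(\<Sum>k. jacobi_iter (1 / T) a y k x) / T
      + elliptic_op a (\<lambda>x. \<Sum>k. jacobi_iter (1 / T) a y k x) x = (if x = y then 1 else 0)" for x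
    using jacobi_series_eq[OF a c summable_rabs_cancel[OF summable(1)], of x]
    unfolding elliptic_op_eq_conductance by (simp add: algebra_simps)
qed

lemma green_eq_summable_solution:
  fixes a :: "'d::finite bond \<Rightarrow> real"
  assumes T: "T > 0" and a: "a \<in> Omega" and u: "u summable_on UNIV"
    and eq: "\<And>x. u x / T + elliptic_op a u x = (if x = y then 1 else 0)"
  shows "green T a y = u"
  unfolding green_def
proof (rule the_equality)
  have u_bounded: "bounded (range u)"
    by (rule summable_on_imp_bounded[OF u])
  then obtain B where B: "\<bar>u x\<bar> \<le> B" for x
    unfolding bounded_iff by auto
  have "(\<lambda>x. u x * u x) summable_on UNIV"
    using B by (rule summable_on_mult_bounded[OF u])
  then show "(\<lambda>x. (u x)\<^sup>2) summable_on UNIV \<and>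
      (\<forall>x. u x / T + nabla_star (\<lambda>b. a b * grad u b) x = (if x = y then 1 else 0))"
    using eq unfolding elliptic_op_def by (simp add: power2_eq_square)
  fix w
  assume w: "(\<lambda>x. (w x)\<^sup>2) summable_on UNIV \<and>
      (\<forall>x. w x / T + nabla_star (\<lambda>b. a b * grad w b) x = (if x = y then 1 else 0))"
  have "\<bar>w x\<bar> \<le> sqrt (\<Sum>\<^sub>\<infinity>x. (w x)\<^sup>2)" for x
  proof -
    have "(w x)\<^sup>2 \<le> (\<Sum>\<^sub>\<infinity>x. (w x)\<^sup>2)"
      using w finite_sum_le_infsum[of "\<lambda>x. (w x)\<^sup>2" UNIV "{x}"] by simp
    then show ?thesis
      using real_sqrt_le_mono by fastforce
  qed
  then have "bounded (range w)"
    unfolding bounded_iff by auto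
  then show "w = u"
    using bounded_solution_unique[OF T a _ u_bounded _ eq] w unfolding elliptic_op_def by blast
qed

lemma
  fixes a :: "'d::finite bond \<Rightarrow> real"
  assumes "T > 0" and "a \<in> Omega"
  shows green_summable: "green T a y summable_on UNIV"
    and green_equation: "green T a y x / T + elliptic_op a (green T a y) x = (if x = y then 1 else 0)"
proof -
  obtain u where "u summable_on UNIV" "\<And>x. u x / T + elliptic_op a u x = (if x = y then 1 else 0)"
    using exists_summable_solution[OF assms, of y] by blast
  moreover from this have "green T a y = u"
    by (intro green_eq_summable_solution[OF assms])
  ultimately show "green T a y summable_on UNIV"
    and "green T a y x / T + elliptic_op a (green T a y) x = (if x = y then 1 else 0)"
    by simp_all
qed

section \<open>Energy identity and positivity\<close>

lemma summation_by_parts: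
  fixes u v \<kappa> :: "'a::ab_group_add \<Rightarrow> real" and h :: 'a
  assumes u: "u summable_on UNIV" and v: "v summable_on UNIV" and \<kappa>: "\<And>x. \<bar>\<kappa> x\<bar> \<le> K"
  defines "f \<equiv> \<lambda>z. u z * (\<kappa> (z - h) * (v z - v (z - h)) - \<kappa> z * (v (z + h) - v z))"
  shows "f summable_on UNIV"
    and "infsum f UNIV = (\<Sum>\<^sub>\<infinity>z. \<kappa> z * (u (z + h) - u z) * (v (z + h) - v z))"
proof -
  obtain B where B: "\<bar>u x\<bar> \<le> B" for x
    using summable_on_imp_bounded[OF u] unfolding bounded_iff by auto
  define g where "g z = \<kappa> z * (v (z + h) - v z)" for z
  have g: "g summable_on UNIV"
    unfolding g_def using \<kappa> by (intro summable_on_mult_bounded summable_on_diff summable_on_shift v)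
  define f1 where "f1 z = u z * g (z - h)" for z
  define f2 where "f2 z = u z * g z" for z
  have f2: "f2 summable_on UNIV"
    unfolding f2_def using B by (intro summable_on_mult_bounded g)
  have f1: "f1 summable_on UNIV"
    unfolding f1_def using B summable_on_shift[OF g, of "- h"] by (intro summable_on_mult_bounded) auto
  have f_eq: "f = (\<lambda>z. f1 z - f2 z)"
    unfolding f_def f1_def f2_def g_def by (simp add: fun_eq_iff algebra_simps)
  show "f summable_on UNIV"
    unfolding f_eq by (intro summable_on_diff f1 f2)
  have "infsum f UNIV = infsum f1 UNIV - infsum f2 UNIV"
    unfolding f_eq by (rule infsum_diff[OF f1 f2])
  also have "infsum f1 UNIV = (\<Sum>\<^sub>\<infinity>z. f1 (z + h))"
    by (rule infsum_shift[symmetric])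
  also have "(\<Sum>\<^sub>\<infinity>z. f1 (z + h)) - infsum f2 UNIV = (\<Sum>\<^sub>\<infinity>z. f1 (z + h) - f2 z)"
    by (rule infsum_diff[symmetric]) (intro summable_on_shift f1, rule f2)
  also have "\<dots> = (\<Sum>\<^sub>\<infinity>z. \<kappa> z * (u (z + h) - u z) * (v (z + h) - v z))"
    unfolding f1_def f2_def g_def by (simp add: algebra_simps)
  finally show "infsum f UNIV = (\<Sum>\<^sub>\<infinity>z. \<kappa> z * (u (z + h) - u z) * (v (z + h) - v z))" .
qed

definition energy_form ::
    "real \<Rightarrow> ('d::finite bond \<Rightarrow> real) \<Rightarrow> ('d point \<Rightarrow> real) \<Rightarrow> ('d point \<Rightarrow> real) \<Rightarrow> real"
  where "energy_form T a u v =
    (\<Sum>\<^sub>\<infinity>x. u x * v x) / T + (\<Sum>i\<in>UNIV. \<Sum>\<^sub>\<infinity>x. a (x, i) * grad u (x, i) * grad v (x, i))"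

lemma energy_form_commute: "energy_form T a u v = energy_form T a v u"
  unfolding energy_form_def by (simp add: mult_ac)

lemma infsum_mult_equation_eq_energy_form:
  fixes a :: "'d::finite bond \<Rightarrow> real"
  assumes a: "a \<in> Omega" and u: "u summable_on UNIV" and v: "v summable_on UNIV"
  shows "(\<Sum>\<^sub>\<infinity>z. u z * (v z / T + elliptic_op a v z)) = energy_form T a u v"
proof -
  let ?h = "\<lambda>i z. u z * (a (z - unitv i, i) * (v z - v (z - unitv i))
                        - a (z, i) * (v (z + unitv i) - v z))"
  have a_abs: "\<bar>a (x, i)\<bar> \<le> 1" for x i
    using OmegaD[OF a, of "(x, i)"] by simp
  have parts: "?h i summable_on UNIV"
    "infsum (?h i) UNIV = (\<Sum>\<^sub>\<infinity>z. a (z, i) * (u (z + unitv i) - u z) * (v (z + unitv i) - v z))" for i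
    using summation_by_parts[OF u v, where \<kappa> = "\<lambda>x. a (x, i)" and K = 1 and h = "unitv i"] a_abs
    by simp_all
  obtain B where "\<bar>u x\<bar> \<le> B" for x
    using summable_on_imp_bounded[OF u] unfolding bounded_iff by auto
  then have uv: "(\<lambda>z. u z * v z) summable_on UNIV"
    by (rule summable_on_mult_bounded[OF v])
  have "(\<Sum>\<^sub>\<infinity>z. u z * (v z / T + elliptic_op a v z))
      = (\<Sum>\<^sub>\<infinity>z. inverse T * (u z * v z) + (\<Sum>i\<in>UNIV. ?h i z))"
    unfolding elliptic_op_eq by (simp add: field_simps sum_distrib_left)
  also have "\<dots> = inverse T * (\<Sum>\<^sub>\<infinity>z. u z * v z) + (\<Sum>i\<in>UNIV. infsum (?h i) UNIV)"
    using parts(1) uv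
    by (simp add: infsum_add summable_on_cmult_right summable_on_finite_sum infsum_finite_sum
        infsum_cmult_right')
  also have "\<dots> = energy_form T a u v"
    unfolding energy_form_def grad_def yb_def xb_def parts(2) by (simp add: field_simps)
  finally show ?thesis .
qed

lemma infsum_mult_point_mass: "(\<Sum>\<^sub>\<infinity>x. u x * (if x = y then 1 else 0)) = (u y :: real)"
proof -
  have "(\<Sum>\<^sub>\<infinity>x. u x * (if x = y then 1 else 0)) = (\<Sum>\<^sub>\<infinity>x\<in>{y}. u x * (if x = y then 1 else 0))"
    by (rule infsum_cong_neutral) auto
  then show ?thesis
    by simp
qed

lemma green_symmetric:
  fixes a :: "'d::finite bond \<Rightarrow> real"
  assumes T: "T > 0" and a: "a \<in> Omega"
  shows "green T a y x = green T a x y"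
proof -
  have "green T a x y = (\<Sum>\<^sub>\<infinity>z. green T a x z * (green T a y z / T + elliptic_op a (green T a y) z))"
    by (simp add: green_equation[OF T a] infsum_mult_point_mass)
  also have "\<dots> = (\<Sum>\<^sub>\<infinity>z. green T a y z * (green T a x z / T + elliptic_op a (green T a x) z))"
    using green_summable[OF T a] energy_form_commute
    by (simp add: infsum_mult_equation_eq_energy_form[OF a])
  also have "\<dots> = green T a y x"
    by (simp add: green_equation[OF T a] infsum_mult_point_mass)
  finally show ?thesis
    by simp
qed

definition green_dipole :: "real \<Rightarrow> ('d::finite bond \<Rightarrow> real) \<Rightarrow> 'd bond \<Rightarrow> 'd point \<Rightarrow> real"
  where "green_dipole T a b x = green T a (yb b) x - green T a (xb b) x"

lemma
  fixes a :: "'d::finite bond \<Rightarrow> real"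
  assumes "T > 0" and "a \<in> Omega"
  shows green_dipole_summable: "green_dipole T a b summable_on UNIV"
    and green_dipole_equation:
      "green_dipole T a b x / T + elliptic_op a (green_dipole T a b) x = dipole b x"
proof -
  show "green_dipole T a b summable_on UNIV"
    unfolding green_dipole_def[abs_def] by (intro summable_on_diff green_summable[OF assms])
  have dipole_eq: "green_dipole T a b = (\<lambda>x. green T a (yb b) x - 1 * green T a (xb b) x)"
    unfolding green_dipole_def[abs_def] by simp
  show "green_dipole T a b x / T + elliptic_op a (green_dipole T a b) x = dipole b x"
    using green_equation[OF assms, of "yb b" x] green_equation[OF assms, of "xb b" x]
    unfolding dipole_eq elliptic_op_diff dipole_def by (simp add: diff_divide_distrib)
qed

lemma grad_green_dipole: "grad (green_dipole T a b) b = hessG T a b b"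
  unfolding grad_def green_dipole_def hessG_def by simp

lemma infsum_mult_dipole: "(\<Sum>\<^sub>\<infinity>x. u x * dipole b x) = grad u b"
proof -
  have "(\<Sum>\<^sub>\<infinity>x. u x * dipole b x) = (\<Sum>\<^sub>\<infinity>x\<in>{yb b, xb b}. u x * dipole b x)"
    by (rule infsum_cong_neutral) (auto simp: dipole_def)
  then show ?thesis
    using yb_neq_xb[of b] by (simp add: dipole_def grad_def)
qed

lemma summable_on_grad:
  assumes "u summable_on UNIV"
  shows "(\<lambda>x. grad u (x, i)) summable_on UNIV"
proof -
  have "(\<lambda>x. u (x + unitv i) - u x) summable_on UNIV"
    by (intro summable_on_diff summable_on_shift assms)
  then show ?thesis
    by (simp add: grad_def yb_def xb_def)
qed

lemma energy_form_diagonal_ge: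
  fixes a :: "'d::finite bond \<Rightarrow> real"
  assumes T: "T > 0" and a: "a \<in> Omega" and u: "u summable_on UNIV"
  shows "(u z)\<^sup>2 / T + a b * (grad u b)\<^sup>2 \<le> energy_form T a u u"
proof -
  have a_bounds: "0 \<le> a b'" "\<bar>a b'\<bar> \<le> 1" for b'
    using OmegaD[OF a, of b'] by auto
  obtain B where "\<bar>u x\<bar> \<le> B" for x
    using summable_on_imp_bounded[OF u] unfolding bounded_iff by auto
  then have "(\<lambda>x. u x * u x) summable_on UNIV"
    by (rule summable_on_mult_bounded[OF u])
  then have "(u z)\<^sup>2 \<le> (\<Sum>\<^sub>\<infinity>x. u x * u x)"
    using finite_sum_le_infsum[of "\<lambda>x. u x * u x" UNIV "{z}"] by (simp add: power2_eq_square)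
  then have first: "(u z)\<^sup>2 / T \<le> (\<Sum>\<^sub>\<infinity>x. u x * u x) / T"
    using T by (simp add: divide_right_mono)
  define E where "E i x = a (x, i) * grad u (x, i) * grad u (x, i)" for i x
  have E_nonneg: "E i x \<ge> 0" for i x
    unfolding E_def using a_bounds by (simp add: mult.assoc)
  have E_summable: "E i summable_on UNIV" for i
  proof -
    obtain G where G: "\<bar>grad u (x, i)\<bar> \<le> G" for x
      using summable_on_imp_bounded[OF summable_on_grad[OF u]] unfolding bounded_iff by auto
    have "\<bar>a (x, i) * grad u (x, i)\<bar> \<le> 1 * G" for x
      unfolding abs_mult using a_bounds(2) G by (intro mult_mono) auto
    then show ?thesis
      unfolding E_def by (intro summable_on_mult_bounded summable_on_grad u)
  qed
  have "a b * (grad u b)\<^sup>2 = E (snd b) (fst b)"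
    unfolding E_def power2_eq_square by (simp add: mult.assoc)
  also have "\<dots> \<le> (\<Sum>\<^sub>\<infinity>x. E (snd b) x)"
    using finite_sum_le_infsum[OF E_summable, of "{fst b}"] E_nonneg by simp
  also have "\<dots> \<le> (\<Sum>i\<in>UNIV. \<Sum>\<^sub>\<infinity>x. E i x)"
    by (rule member_le_sum) (auto intro: infsum_nonneg E_nonneg)
  finally show ?thesis
    using first unfolding energy_form_def E_def by (simp add: power2_eq_square)
qed

lemma hessG_eq_energy_form:
  fixes a :: "'d::finite bond \<Rightarrow> real"
  assumes T: "T > 0" and a: "a \<in> Omega"
  shows "hessG T a b b = energy_form T a (green_dipole T a b) (green_dipole T a b)"
proof -
  let ?g = "green_dipole T a b"
  have "hessG T a b b = (\<Sum>\<^sub>\<infinity>x. ?g x * (?g x / T + elliptic_op a ?g x))"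
    by (simp add: green_dipole_equation[OF T a] infsum_mult_dipole grad_green_dipole)
  also have "\<dots> = energy_form T a ?g ?g"
    using green_dipole_summable[OF T a] by (intro infsum_mult_equation_eq_energy_form[OF a])
  finally show ?thesis .
qed

lemma green_dipole_nonzero:
  fixes a :: "'d::finite bond \<Rightarrow> real"
  assumes T: "T > 0" and a: "a \<in> Omega"
  obtains z where "green_dipole T a b z \<noteq> 0"
proof (cases "\<exists>z. green_dipole T a b z \<noteq> 0")
  case False
  then have "dipole b (yb b) = 0"
    using green_dipole_equation[OF T a, of b "yb b"] by (simp add: elliptic_op_eq)
  then show ?thesis
    using yb_neq_xb[of b] by (simp add: dipole_def)
qed blast

lemma hessG_bounds:
  fixes a :: "'d::finite bond \<Rightarrow> real"
  assumes T: "T > 0" and a: "a \<in> Omega"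
  shows "hessG T a b b > 0" and "1 - a b * hessG T a b b > 0"
proof -
  let ?g = "green_dipole T a b"
  let ?H = "hessG T a b b"
  obtain z where "?g z \<noteq> 0"
    using green_dipole_nonzero[OF T a] .
  then have "(?g z)\<^sup>2 / T > 0"
    using T by simp
  moreover have "(?g z)\<^sup>2 / T + a b * ?H\<^sup>2 \<le> ?H"
    using energy_form_diagonal_ge[OF T a green_dipole_summable[OF T a, of b], where z = z and b = b]
    unfolding hessG_eq_energy_form[OF T a, symmetric] grad_green_dipole .
  ultimately have gt: "a b * ?H\<^sup>2 < ?H"
    by linarith
  moreover have "a b * ?H\<^sup>2 \<ge> 0"
    using OmegaD[OF a, of b] by simp
  ultimately show pos: "?H > 0"
    by linarith
  have "(1 - a b * ?H) * ?H > 0"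
    using gt by (simp add: power2_eq_square algebra_simps)
  with pos show "1 - a b * ?H > 0"
    by (simp add: zero_less_mult_iff)
qed

section \<open>Perturbing a single coefficient\<close>

lemma grad_diff: "grad (\<lambda>x. u x - k * v x) b = grad u b - k * grad v b"
  unfolding grad_def by (simp add: algebra_simps)

lemma rank_one_denominator_pos:
  fixes a :: "'d::finite bond \<Rightarrow> real"
  assumes T: "T > 0" and a: "a \<in> Omega" and t: "t \<in> {0..1}"
  shows "1 + (t - a b) * hessG T a b b > 0"
proof -
  have "t * hessG T a b b \<ge> 0"
    using t hessG_bounds(1)[OF T a, of b] by simp
  then show ?thesis
    using hessG_bounds(2)[OF T a, of b] by (simp add: algebra_simps)
qed

lemma rank_one_update:
  fixes a :: "'d::finite bond \<Rightarrow> real"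
  assumes T: "T > 0" and a: "a \<in> Omega" and t: "t \<in> {0..1}"
    and u: "bounded (range u)" "\<And>x. u x / T + elliptic_op a u x = f x"
    and v: "bounded (range v)"
      "\<And>x. v x / T + elliptic_op (a(b := t)) v x = f x - (t - a b) * c * dipole b x"
  shows "v = (\<lambda>x. u x - (t - a b) * (grad u b + c) / (1 + (t - a b) * hessG T a b b)
                       * green_dipole T a b x)"
proof -
  define \<delta> where "\<delta> = t - a b"
  define H where "H = hessG T a b b"
  define k where "k = \<delta> * (grad u b + c) / (1 + \<delta> * H)"
  let ?g = "green_dipole T a b"
  define w where "w = (\<lambda>x. u x - k * ?g x)"
  have k: "k * (1 + \<delta> * H) = \<delta> * (grad u b + c)"
    unfolding k_def \<delta>_def H_def using rank_one_denominator_pos[OF T a t, of b] by simp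
  have "w x / T + elliptic_op (a(b := t)) w x
      = (u x / T + elliptic_op a u x) - k * (?g x / T + elliptic_op a ?g x)
        + \<delta> * (grad u b - k * H) * dipole b x" for x
    unfolding w_def elliptic_op_fun_upd elliptic_op_diff H_def grad_green_dipole[symmetric] \<delta>_def
    by (simp add: grad_def algebra_simps diff_divide_distrib)
  also have "\<dots> x = f x + (\<delta> * (grad u b + c) - k * (1 + \<delta> * H)) * dipole b x - \<delta> * c * dipole b x"
    for x
    unfolding u(2) green_dipole_equation[OF T a] by (simp add: algebra_simps)
  finally have w_eq: "w x / T + elliptic_op (a(b := t)) w x = f x - \<delta> * c * dipole b x" for x
    unfolding k by simp
  have "bounded (range (\<lambda>x. k * ?g x))"
    using bounded_scaling[OF summable_on_imp_bounded[OF green_dipole_summable[OF T a, of b]], of k]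
    by (simp add: image_image)
  then have w_bounded: "bounded (range w)"
    unfolding w_def by (intro bounded_minus_comp u(1))
  have "v = w"
    by (rule bounded_solution_unique[OF T fun_upd_in_Omega[OF a t] v(1) w_bounded v(2) w_eq[unfolded \<delta>_def]])
  then show ?thesis
    unfolding w_def k_def \<delta>_def H_def by (simp add: fun_eq_iff)
qed

lemma grad_rank_one_update:
  fixes a :: "'d::finite bond \<Rightarrow> real"
  assumes T: "T > 0" and a: "a \<in> Omega" and t: "t \<in> {0..1}"
    and v: "v = (\<lambda>x. u x - (t - a b) * (grad u b + c) / (1 + (t - a b) * hessG T a b b)
                         * green_dipole T a b x)"
  shows "grad v b + c = (grad u b + c) / (1 + (t - a b) * hessG T a b b)"
proof -
  let ?D = "1 + (t - a b) * hessG T a b b"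
  have "grad v b = grad u b - (t - a b) * (grad u b + c) / ?D * hessG T a b b"
    unfolding v grad_diff grad_green_dipole ..
  moreover have "?D \<noteq> 0"
    using rank_one_denominator_pos[OF T a t, of b] by simp
  ultimately show ?thesis
    by (simp add: field_simps)
qed

lemma green_fun_upd:
  fixes a :: "'d::finite bond \<Rightarrow> real"
  assumes T: "T > 0" and a: "a \<in> Omega" and t: "t \<in> {0..1}"
  shows "green T (a(b := t)) y = (\<lambda>x. green T a y x
           - (t - a b) * grad (green T a y) b / (1 + (t - a b) * hessG T a b b)
             * green_dipole T a b x)"
proof -
  have a': "a(b := t) \<in> Omega"
    by (rule fun_upd_in_Omega[OF a t])
  have "green T (a(b := t)) y = (\<lambda>x. green T a y x
          - (t - a b) * (grad (green T a y) b + 0) / (1 + (t - a b) * hessG T a b b)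
            * green_dipole T a b x)"
  proof (rule rank_one_update[OF T a t])
    show "bounded (range (green T a y))" "bounded (range (green T (a(b := t)) y))"
      using summable_on_imp_bounded green_summable[OF T a] green_summable[OF T a'] by blast+
    show "green T a y x / T + elliptic_op a (green T a y) x = (if x = y then 1 else 0)" for x
      by (rule green_equation[OF T a])
    show "green T (a(b := t)) y x / T + elliptic_op (a(b := t)) (green T (a(b := t)) y) x
        = (if x = y then 1 else 0) - (t - a b) * 0 * dipole b x" for x
      using green_equation[OF T a'] by simp
  qed
  then show ?thesis
    by simp
qed

lemma grad_green_fun_upd:
  fixes a :: "'d::finite bond \<Rightarrow> real"
  assumes T: "T > 0" and a: "a \<in> Omega" and t: "t \<in> {0..1}"
  shows "grad (green T (a(b := t)) y) b = grad (green T a y) b / (1 + (t - a b) * hessG T a b b)"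
  using grad_rank_one_update[OF T a t, where c = 0] green_fun_upd[OF T a t] by simp

lemma hessG_eq_grad_diff: "hessG T a b b = grad (green T a (yb b)) b - grad (green T a (xb b)) b"
  unfolding hessG_def grad_def by simp

lemma hessG_fun_upd:
  fixes a :: "'d::finite bond \<Rightarrow> real"
  assumes T: "T > 0" and a: "a \<in> Omega" and t: "t \<in> {0..1}"
  shows "hessG T (a(b := t)) b b = hessG T a b b / (1 + (t - a b) * hessG T a b b)"
  unfolding hessG_eq_grad_diff[of T "a(b := t)"] grad_green_fun_upd[OF T a t]
  by (simp add: hessG_eq_grad_diff diff_divide_distrib)

lemma green_dipole_origin:
  fixes a :: "'d::finite bond \<Rightarrow> real"
  assumes T: "T > 0" and a: "a \<in> Omega"
  shows "green_dipole T a b 0 = gradG T a b"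
  unfolding green_dipole_def gradG_def grad_def using green_symmetric[OF T a] by simp

lemma mod_corrector_equation:
  assumes phi: "is_mod_corrector T e phi" and a: "a \<in> Omega"
  shows "phi a x / T + elliptic_op a (phi a) x = - nabla_star (\<lambda>b. a b * ebond e b) x"
proof -
  have "nabla_star (\<lambda>b. a b * (grad (phi a) b + ebond e b)) x
      = elliptic_op a (phi a) x + nabla_star (\<lambda>b. a b * ebond e b) x"
    unfolding elliptic_op_def distrib_left by (rule nabla_star_add)
  moreover have "phi a x / T + nabla_star (\<lambda>b. a b * (grad (phi a) b + ebond e b)) x = 0"
    using phi a unfolding is_mod_corrector_def by blast
  ultimately show ?thesis
    by linarith
qed

lemma mod_corrector_fun_upd:
  fixes a :: "'d::finite bond \<Rightarrow> real"
  assumes T: "T > 0" and phi: "is_mod_corrector T e phi" and a: "a \<in> Omega" and t: "t \<in> {0..1}"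
  shows "phi (a(b := t)) = (\<lambda>x. phi a x
           - (t - a b) * (grad (phi a) b + ebond e b) / (1 + (t - a b) * hessG T a b b)
             * green_dipole T a b x)"
proof (rule rank_one_update[OF T a t])
  have a': "a(b := t) \<in> Omega"
    by (rule fun_upd_in_Omega[OF a t])
  show "bounded (range (phi a))" "bounded (range (phi (a(b := t))))"
    using phi a a' unfolding is_mod_corrector_def by blast+
  show "phi a x / T + elliptic_op a (phi a) x = - nabla_star (\<lambda>b. a b * ebond e b) x" for x
    by (rule mod_corrector_equation[OF phi a])
  show "phi (a(b := t)) x / T + elliptic_op (a(b := t)) (phi (a(b := t))) x
      = - nabla_star (\<lambda>b. a b * ebond e b) x - (t - a b) * ebond e b * dipole b x" for x
    unfolding mod_corrector_equation[OF phi a'] nabla_star_fun_upd by simp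
qed

lemma has_real_derivative_within_eq_on:
  assumes "(f has_real_derivative D) (at s)" and "s \<in> S" and "\<And>t. t \<in> S \<Longrightarrow> f t = g t"
  shows "(g has_real_derivative D) (at s within S)"
  by (rule has_field_derivative_transform_within[OF has_field_derivative_at_within[OF assms(1)], of 1])
     (use assms in auto)

lemma mod_corrector_derivative:
  fixes a :: "'d::finite bond \<Rightarrow> real"
  assumes T: "T > 0" and phi: "is_mod_corrector T e phi" and a: "a \<in> Omega"
  shows "((\<lambda>t. phi (a(b := t)) 0) has_real_derivative
           (- gradG T a b * (grad (phi a) b + ebond e b))) (at (a b) within {0..1})"
proof (rule has_real_derivative_within_eq_on)
  let ?F = "grad (phi a) b + ebond e b" and ?H = "hessG T a b b"
  show "((\<lambda>t. phi a 0 - (t - a b) * ?F / (1 + (t - a b) * ?H) * gradG T a b) has_real_derivative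
          (- gradG T a b * ?F)) (at (a b))"
    by (auto intro!: derivative_eq_intros)
  show "a b \<in> {0..1}"
    using OmegaD[OF a] by simp
  show "phi a 0 - (t - a b) * ?F / (1 + (t - a b) * ?H) * gradG T a b = phi (a(b := t)) 0"
    if "t \<in> {0..1}" for t
    unfolding mod_corrector_fun_upd[OF T phi a that] green_dipole_origin[OF T a] ..
qed

lemma mod_corrector_second_derivative:
  fixes a :: "'d::finite bond \<Rightarrow> real"
  assumes T: "T > 0" and phi: "is_mod_corrector T e phi" and a: "a \<in> Omega"
  shows "((\<lambda>t. - gradG T (a(b := t)) b * (grad (phi (a(b := t))) b + ebond e b))
           has_real_derivative (- 2 * hessG T a b b * (- gradG T a b * (grad (phi a) b + ebond e b))))
           (at (a b) within {0..1})"
proof (rule has_real_derivative_within_eq_on)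
  let ?F = "grad (phi a) b + ebond e b" and ?H = "hessG T a b b"
  show "((\<lambda>t. - gradG T a b * ?F / (1 + (t - a b) * ?H)\<^sup>2) has_real_derivative
          (- 2 * ?H * (- gradG T a b * ?F))) (at (a b))"
    by (auto intro!: derivative_eq_intros)
  show "a b \<in> {0..1}"
    using OmegaD[OF a] by simp
  show "- gradG T a b * ?F / (1 + (t - a b) * ?H)\<^sup>2
      = - gradG T (a(b := t)) b * (grad (phi (a(b := t))) b + ebond e b)"
    if t: "t \<in> {0..1}" for t
    using grad_rank_one_update[OF T a t mod_corrector_fun_upd[OF T phi a t]]
    unfolding gradG_def grad_green_fun_upd[OF T a t] by (simp add: power2_eq_square)
qed

lemma hessG_derivative:
  fixes a :: "'d::finite bond \<Rightarrow> real"
  assumes T: "T > 0" and a: "a \<in> Omega"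
  shows "((\<lambda>t. hessG T (a(b := t)) b b) has_real_derivative (- (hessG T a b b)\<^sup>2))
           (at (a b) within {0..1})"
proof (rule has_real_derivative_within_eq_on)
  let ?H = "hessG T a b b"
  show "((\<lambda>t. ?H / (1 + (t - a b) * ?H)) has_real_derivative (- ?H\<^sup>2)) (at (a b))"
    by (auto intro!: derivative_eq_intros simp: power2_eq_square)
  show "a b \<in> {0..1}"
    using OmegaD[OF a] by simp
  show "?H / (1 + (t - a b) * ?H) = hessG T (a(b := t)) b b" if "t \<in> {0..1}" for t
    by (rule hessG_fun_upd[OF T a that, symmetric])
qed

theorem lemma7:
  fixes T :: real and e :: "real ^ 'd::finite" and b :: "'d bond"
    and phi :: "('d bond \<Rightarrow> real) \<Rightarrow> 'd point \<Rightarrow> real"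
  assumes "T > 0" and "norm e = 1" and "is_mod_corrector T e phi"
  shows "\<forall>a\<in>Omega.
     ((\<lambda>t. phi (a(b := t)) 0) has_real_derivative
        (- gradG T a b * (grad (phi a) b + ebond e b))) (at (a b) within {0..1})
   \<and> ((\<lambda>t. - gradG T (a(b := t)) b * (grad (phi (a(b := t))) b + ebond e b))
        has_real_derivative
        (- 2 * hessG T a b b * (- gradG T a b * (grad (phi a) b + ebond e b))))
        (at (a b) within {0..1})
   \<and> ((\<lambda>t. hessG T (a(b := t)) b b) has_real_derivative (- (hessG T a b b)\<^sup>2))
        (at (a b) within {0..1})
   \<and> hessG T a b b > 0
   \<and> 1 - a b * hessG T a b b > 0"
  using mod_corrector_derivative[OF assms(1,3)] mod_corrector_second_derivative[OF assms(1,3)]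
    hessG_derivative[OF assms(1)] hessG_bounds[OF assms(1)]
  by blast

end
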